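(* Let $M$ be a finite matroid and let $d$ be the size of its largest circuit. Then $\mathrm{bd}(M)\ge\log_2 d$.
   Context: For a rooted tree $T$, $\|T\|$ is its number of edges and its depth is the number of edges of a longest root-to-leaf path. A depth-decomposition of a finite matroid $M$ (rank function $r$) is a pair $(T,f)$ with $T$ a rooted tree and $f:M\to V(T)$ such that (1) $r(M)=\|T\|$ and (2) $r(X)\le\|T^*(X)\|$ for every $X\subseteq M$, where $T^*(X)$ is the union of the paths from the root to all vertices of $f(X)$. The branch-depth $\mathrm{bd}(M)$ is the minimum depth of $T$ over all depth-decompositions $(T,f)$ of $M$. *)

theory Defs
  imports Complex_Main
begin

definition matroid :: "'a set \<Rightarrow> ('a set \<Rightarrow> bool) \<Rightarrow> bool" where
  "matroid E indep \<longleftrightarrow>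
     finite E \<and>
     (\<forall>X. indep X \<longrightarrow> X \<subseteq> E) \<and>
     indep {} \<and>
     (\<forall>X Y. indep X \<and> Y \<subseteq> X \<longrightarrow> indep Y) \<and>
     (\<forall>X Y. indep X \<and> indep Y \<and> card X < card Y \<longrightarrow>
        (\<exists>y \<in> Y - X. indep (insert y X)))"

definition mrank :: "('a set \<Rightarrow> bool) \<Rightarrow> 'a set \<Rightarrow> nat" where
  "mrank indep X = Max {card Y | Y. Y \<subseteq> X \<and> indep Y}"

definition circuit :: "'a set \<Rightarrow> ('a set \<Rightarrow> bool) \<Rightarrow> 'a set \<Rightarrow> bool" where
  "circuit E indep C \<longleftrightarrow> C \<subseteq> E \<and> \<not> indep C \<and> (\<forall>D. D \<subset> C \<longrightarrow> indep D)"

text \<open>Every non-root vertex v has the edge from v to its parent; every vertex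
reaches the root by iterating the parent map, so this is exactly a rooted tree
whose edges correspond to the non-root vertices.\<close>

definition rooted_tree :: "'v set \<Rightarrow> 'v \<Rightarrow> ('v \<Rightarrow> 'v) \<Rightarrow> bool" where
  "rooted_tree V rt par \<longleftrightarrow>
     finite V \<and> rt \<in> V \<and>
     (\<forall>v \<in> V - {rt}. par v \<in> V) \<and>
     (\<forall>v \<in> V. \<exists>n. (par ^^ n) v = rt)"

definition tdist :: "'v \<Rightarrow> ('v \<Rightarrow> 'v) \<Rightarrow> 'v \<Rightarrow> nat" where
  "tdist rt par v = (LEAST n. (par ^^ n) v = rt)"

definition tedges :: "'v set \<Rightarrow> nat" where
  "tedges V = card V - 1"

definition tdepth :: "'v set \<Rightarrow> 'v \<Rightarrow> ('v \<Rightarrow> 'v) \<Rightarrow> nat" where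
  "tdepth V rt par = Max (tdist rt par ` V)"

text \<open>Edges of the path from the root to v, identified with the non-root vertices on it.\<close>
definition path_edges :: "'v \<Rightarrow> ('v \<Rightarrow> 'v) \<Rightarrow> 'v \<Rightarrow> 'v set" where
  "path_edges rt par v = {(par ^^ k) v | k. k < tdist rt par v}"

definition tstar_edges :: "'v \<Rightarrow> ('v \<Rightarrow> 'v) \<Rightarrow> 'v set \<Rightarrow> nat" where
  "tstar_edges rt par S = card (\<Union>v \<in> S. path_edges rt par v)"

definition depth_decomposition ::
  "'a set \<Rightarrow> ('a set \<Rightarrow> bool) \<Rightarrow> 'v set \<Rightarrow> 'v \<Rightarrow> ('v \<Rightarrow> 'v) \<Rightarrow> ('a \<Rightarrow> 'v) \<Rightarrow> bool" where
  "depth_decomposition E indep V rt par f \<longleftrightarrow>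
     rooted_tree V rt par \<and>
     (\<forall>x \<in> E. f x \<in> V) \<and>
     mrank indep E = tedges V \<and>
     (\<forall>X. X \<subseteq> E \<longrightarrow> mrank indep X \<le> tstar_edges rt par (f ` X))"

text \<open>Trees are finite, so taking vertices in nat loses no generality.\<close>
definition branch_depth :: "'a set \<Rightarrow> ('a set \<Rightarrow> bool) \<Rightarrow> nat" where
  "branch_depth E indep =
     (LEAST k. \<exists>(V :: nat set) rt par f.
         depth_decomposition E indep V rt par f \<and> tdepth V rt par = k)"

end

(* Take a depth-decomposition of depth bd(M) and a largest circuit C. Deleting the elements
   outside C one by one, and contracting one suitable tree edge whenever a coloop is deleted,
   yields a depth-decomposition of the circuit M|C, whose tree has |C| - 1 edges. Below every
   edge u of that tree there are more elements of C than edges, because the elements whose root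
   paths avoid u form a proper, hence independent, subset of C. Giving a vertex at depth k the
   weight 2^-k, a Kraft-type double count then shows that the weights of the elements of C sum
   to at most 1, so |C| <= 2^bd(M). *)

theory Submission
  imports Defs
begin

locale indep_matroid =
  fixes E :: "'a set" and indep :: "'a set \<Rightarrow> bool"
  assumes matroid: "matroid E indep"
begin

lemma finite_carrier: "finite E"
  using matroid unfolding matroid_def by blast

lemma indep_subset_carrier: "indep X \<Longrightarrow> X \<subseteq> E"
  using matroid unfolding matroid_def by blast

lemma indep_empty: "indep {}"
  using matroid unfolding matroid_def by blast

lemma indep_subset: "indep X \<Longrightarrow> Y \<subseteq> X \<Longrightarrow> indep Y"
  using matroid unfolding matroid_def by blast

lemma indep_augment: "indep X \<Longrightarrow> indep Y \<Longrightarrow> card X < card Y \<Longrightarrow> \<exists>y\<in>Y - X. indep (insert y X)"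
  using matroid unfolding matroid_def by blast

lemma finite_indep: "indep X \<Longrightarrow> finite X"
  using indep_subset_carrier finite_carrier finite_subset by blast

lemma finite_indep_cards: "finite {card Y | Y. Y \<subseteq> X \<and> indep Y}"
proof -
  have "{card Y | Y. Y \<subseteq> X \<and> indep Y} \<subseteq> card ` Pow E"
    using indep_subset_carrier by blast
  then show ?thesis
    using finite_carrier by (meson finite_Pow_iff finite_imageI finite_subset)
qed

lemma card_le_rank: "Y \<subseteq> X \<Longrightarrow> indep Y \<Longrightarrow> card Y \<le> mrank indep X"
  unfolding mrank_def by (rule Max_ge[OF finite_indep_cards]) blast

lemma exists_basis: "\<exists>Y. Y \<subseteq> X \<and> indep Y \<and> card Y = mrank indep X"
proof -
  have "{card Y | Y. Y \<subseteq> X \<and> indep Y} \<noteq> {}"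
    using indep_empty by blast
  from Max_in[OF finite_indep_cards this] show ?thesis
    unfolding mrank_def by auto
qed

lemma rank_indep: "indep X \<Longrightarrow> mrank indep X = card X"
  by (metis exists_basis card_le_rank card_mono finite_indep order.refl order_antisym)

lemma rank_mono: "X \<subseteq> Y \<Longrightarrow> mrank indep X \<le> mrank indep Y"
  using exists_basis[of X] card_le_rank[of _ Y] by (metis order_trans)

lemma rank_empty: "mrank indep {} = 0"
  using rank_indep[OF indep_empty] by simp

lemma rank_insert_le: "mrank indep (insert e X) \<le> mrank indep X + 1"
proof -
  obtain Y where Y: "Y \<subseteq> insert e X" "indep Y" "card Y = mrank indep (insert e X)"
    using exists_basis by blast
  have "card (Y - {e}) \<le> mrank indep X"
    using Y indep_subset by (intro card_le_rank) auto
  moreover have "card Y \<le> card (Y - {e}) + 1"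
    using finite_indep[OF Y(2)] by (metis card_Diff1_le card_Diff_singleton_if le_SucI le_add1
        Suc_eq_plus1 card_Suc_Diff1 eq_imp_le)
  ultimately show ?thesis
    using Y by simp
qed

lemma indep_extend_basis:
  assumes "indep I" "I \<subseteq> F"
  shows "\<exists>J. I \<subseteq> J \<and> J \<subseteq> F \<and> indep J \<and> card J = mrank indep F"
  using assms
proof (induction "mrank indep F - card I" arbitrary: I rule: less_induct)
  case less
  have le: "card I \<le> mrank indep F"
    using card_le_rank less.prems by blast
  show ?case
  proof (cases "card I = mrank indep F")
    case True
    then show ?thesis using less.prems by blast
  next
    case False
    obtain Y where Y: "Y \<subseteq> F" "indep Y" "card Y = mrank indep F"
      using exists_basis by blast
    then obtain y where y: "y \<in> Y - I" "indep (insert y I)"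
      using indep_augment[OF less.prems(1) Y(2)] le False by force
    have "card (insert y I) = card I + 1"
      using y finite_indep[OF less.prems(1)] by simp
    then have "mrank indep F - card (insert y I) < mrank indep F - card I"
      using le False by simp
    moreover have "insert y I \<subseteq> F"
      using y Y less.prems by blast
    ultimately show ?thesis
      using less.hyps y(2) by (meson subset_insertI subset_trans)
  qed
qed

text \<open>A coloop of a set stays a coloop of every subset: a basis of \<open>X\<close> extends to one of \<open>F\<close>,
  and the augmentation from a basis of \<open>insert e F\<close> can only add \<open>e\<close>.\<close>

lemma rank_insert_Suc_subset:
  assumes "X \<subseteq> F" "mrank indep (insert e F) = mrank indep F + 1"
  shows "mrank indep (insert e X) = mrank indep X + 1"
proof -
  obtain I where I: "I \<subseteq> X" "indep I" "card I = mrank indep X"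
    using exists_basis by blast
  obtain J where J: "I \<subseteq> J" "J \<subseteq> F" "indep J" "card J = mrank indep F"
    using indep_extend_basis[OF I(2)] I(1) assms(1) by (meson subset_trans)
  obtain Y where Y: "Y \<subseteq> insert e F" "indep Y" "card Y = mrank indep F + 1"
    using exists_basis[of "insert e F"] assms(2) by auto
  obtain y where y: "y \<in> Y - J" "indep (insert y J)"
    using indep_augment[OF J(3) Y(2)] J Y by force
  have "y = e"
  proof (rule ccontr)
    assume "y \<noteq> e"
    then have "card (insert y J) \<le> mrank indep F"
      using y Y J by (intro card_le_rank) auto
    moreover have "card (insert y J) = card J + 1"
      using y finite_indep[OF J(3)] by simp
    ultimately show False
      using J by simp
  qed
  have "indep (insert e I)" and "e \<notin> I"
    using \<open>y = e\<close> y J(1) indep_subset by blast+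
  then have "card (insert e I) \<le> mrank indep (insert e X)"
    using I(1) by (intro card_le_rank) auto
  moreover have "card (insert e I) = mrank indep X + 1"
    using \<open>e \<notin> I\<close> finite_indep[OF I(2)] I by simp
  ultimately show ?thesis
    using rank_insert_le[of e X] by simp
qed

lemma circuit_finite: "circuit E indep C \<Longrightarrow> finite C"
  unfolding circuit_def using finite_carrier finite_subset by blast

lemma circuit_nonempty: "circuit E indep C \<Longrightarrow> C \<noteq> {}"
  unfolding circuit_def using indep_empty by blast

lemma circuit_rank:
  assumes "circuit E indep C"
  shows "mrank indep C = card C - 1"
proof -
  have fin: "finite C"
    using circuit_finite[OF assms] .
  obtain x where x: "x \<in> C"
    using circuit_nonempty[OF assms] by blast
  have "C - {x} \<subset> C"
    using x by blast
  then have "card (C - {x}) \<le> mrank indep C"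
    using assms unfolding circuit_def by (intro card_le_rank) auto
  then have "card C - 1 \<le> mrank indep C"
    using x fin by simp
  moreover obtain Y where Y: "Y \<subseteq> C" "indep Y" "card Y = mrank indep C"
    using exists_basis by blast
  have "Y \<noteq> C"
    using Y(2) assms unfolding circuit_def by blast
  then have "mrank indep C < card C"
    using Y fin psubset_card_mono by (metis psubsetI)
  ultimately show ?thesis
    by simp
qed

lemma finite_circuits: "finite {C. circuit E indep C}"
proof -
  have "{C. circuit E indep C} \<subseteq> Pow E"
    unfolding circuit_def by blast
  then show ?thesis
    using finite_carrier finite_subset by blast
qed

end

locale rtree =
  fixes V :: "'v set" and rt :: 'v and par :: "'v \<Rightarrow> 'v"
  assumes rooted_tree: "rooted_tree V rt par"
begin

lemma finite_vertices: "finite V"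
  using rooted_tree unfolding rooted_tree_def by blast

lemma root_in_vertices: "rt \<in> V"
  using rooted_tree unfolding rooted_tree_def by blast

lemma funpow_tdist_eq_root: "v \<in> V \<Longrightarrow> (par ^^ tdist rt par v) v = rt"
  unfolding tdist_def using rooted_tree unfolding rooted_tree_def by (meson LeastI_ex)

lemma funpow_neq_root: "i < tdist rt par v \<Longrightarrow> (par ^^ i) v \<noteq> rt"
  unfolding tdist_def using not_less_Least by blast

lemma tdist_le: "(par ^^ i) v = rt \<Longrightarrow> tdist rt par v \<le> i"
  unfolding tdist_def by (rule Least_le)

lemma funpow_in_vertices: "v \<in> V \<Longrightarrow> i \<le> tdist rt par v \<Longrightarrow> (par ^^ i) v \<in> V"
proof (induction i)
  case (Suc i)
  then have "(par ^^ i) v \<in> V - {rt}"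
    using funpow_neq_root[of i v] by auto
  then show ?case
    using rooted_tree unfolding rooted_tree_def by auto
qed simp

lemma tdist_funpow:
  assumes "v \<in> V" "i \<le> tdist rt par v"
  shows "tdist rt par ((par ^^ i) v) = tdist rt par v - i"
proof (rule antisym)
  have "(par ^^ (tdist rt par v - i)) ((par ^^ i) v) = (par ^^ tdist rt par v) v"
    using assms(2) by (metis funpow_add le_add_diff_inverse2 o_apply)
  then show "tdist rt par ((par ^^ i) v) \<le> tdist rt par v - i"
    using funpow_tdist_eq_root[OF assms(1)] by (intro tdist_le) simp
  have "(par ^^ (tdist rt par ((par ^^ i) v) + i)) v = (par ^^ tdist rt par ((par ^^ i) v)) ((par ^^ i) v)"
    by (simp add: funpow_add)
  then have "tdist rt par v \<le> tdist rt par ((par ^^ i) v) + i"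
    using funpow_tdist_eq_root[OF funpow_in_vertices[OF assms]] by (intro tdist_le) simp
  then show "tdist rt par v - i \<le> tdist rt par ((par ^^ i) v)"
    by simp
qed

lemma mem_path_edges_iff: "u \<in> path_edges rt par v \<longleftrightarrow> (\<exists>i < tdist rt par v. u = (par ^^ i) v)"
  unfolding path_edges_def by blast

lemma finite_path_edges: "finite (path_edges rt par v)"
  and card_path_edges_le: "card (path_edges rt par v) \<le> tdist rt par v"
proof -
  have path: "path_edges rt par v = (\<lambda>i. (par ^^ i) v) ` {..<tdist rt par v}"
    unfolding path_edges_def by auto
  show "finite (path_edges rt par v)"
    unfolding path by simp
  show "card (path_edges rt par v) \<le> tdist rt par v"
    unfolding path using card_image_le by fastforce
qed

lemma path_edges_subset: "v \<in> V \<Longrightarrow> path_edges rt par v \<subseteq> V - {rt}"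
proof
  fix u assume "v \<in> V" "u \<in> path_edges rt par v"
  then obtain i where "i < tdist rt par v" "u = (par ^^ i) v"
    using mem_path_edges_iff by blast
  then show "u \<in> V - {rt}"
    using funpow_in_vertices[OF \<open>v \<in> V\<close>] funpow_neq_root by simp
qed

lemma self_in_path_edges: "v \<in> V \<Longrightarrow> v \<noteq> rt \<Longrightarrow> v \<in> path_edges rt par v"
  using funpow_tdist_eq_root[of v] mem_path_edges_iff[of v v] by (metis funpow_0 neq0_conv)

lemma path_edges_trans:
  assumes "v \<in> V" "u \<in> path_edges rt par v"
  shows "path_edges rt par u \<subseteq> path_edges rt par v"
proof
  fix w assume "w \<in> path_edges rt par u"
  then obtain j where j: "j < tdist rt par u" "w = (par ^^ j) u"
    using mem_path_edges_iff by blast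
  obtain i where i: "i < tdist rt par v" "u = (par ^^ i) v"
    using assms(2) mem_path_edges_iff by blast
  have "tdist rt par u = tdist rt par v - i"
    using tdist_funpow assms(1) i by simp
  then have "j + i < tdist rt par v" "w = (par ^^ (j + i)) v"
    using i j by (auto simp: funpow_add)
  then show "w \<in> path_edges rt par v"
    using mem_path_edges_iff by blast
qed

lemma tdist_less_path_edges:
  assumes "v \<in> V" "u \<in> path_edges rt par v" "u \<noteq> v"
  shows "tdist rt par u < tdist rt par v"
proof -
  obtain i where i: "i < tdist rt par v" "u = (par ^^ i) v"
    using assms(2) mem_path_edges_iff by blast
  then have "i \<noteq> 0"
    using assms(3) by (metis funpow_0)
  then show ?thesis
    using tdist_funpow[OF assms(1)] i by simp
qed

lemma path_edges_linear:
  assumes "v \<in> V" "u \<in> path_edges rt par v" "u' \<in> path_edges rt par v"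
    and "tdist rt par u \<le> tdist rt par u'"
  shows "u = u' \<or> u \<in> path_edges rt par u'"
proof -
  obtain i where i: "i < tdist rt par v" "u = (par ^^ i) v"
    using assms(2) mem_path_edges_iff by blast
  obtain j where j: "j < tdist rt par v" "u' = (par ^^ j) v"
    using assms(3) mem_path_edges_iff by blast
  have tdist_u': "tdist rt par u' = tdist rt par v - j"
    using tdist_funpow assms(1) j by simp
  then have "j \<le> i"
    using assms(4) tdist_funpow assms(1) i j by simp
  then have "u = (par ^^ (i - j)) u'"
    using i j by (metis funpow_add le_add_diff_inverse2 o_apply)
  moreover have "i - j < tdist rt par u' \<or> i = j"
    using tdist_u' i \<open>j \<le> i\<close> by auto
  ultimately show ?thesis
    using mem_path_edges_iff i j by auto
qed

lemma tdist_le_tdepth: "v \<in> V \<Longrightarrow> tdist rt par v \<le> tdepth V rt par"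
  unfolding tdepth_def using finite_vertices by simp

end

lemma sum_sum_eq_sum_card:
  fixes g :: "'b \<Rightarrow> real"
  assumes "finite A" "finite W" "\<And>a. a \<in> A \<Longrightarrow> Q a \<subseteq> W"
  shows "(\<Sum>a\<in>A. \<Sum>u\<in>Q a. g u) = (\<Sum>u\<in>W. real (card {a\<in>A. u \<in> Q a}) * g u)"
proof -
  have "(\<Sum>u\<in>Q a. g u) = (\<Sum>u\<in>W. if u \<in> Q a then g u else 0)" if "a \<in> A" for a
    using sum.inter_restrict[OF assms(2), of g "Q a"] assms(3)[OF that] by (simp add: Int_absorb1)
  then have "(\<Sum>a\<in>A. \<Sum>u\<in>Q a. g u) = (\<Sum>a\<in>A. \<Sum>u\<in>W. if u \<in> Q a then g u else 0)"
    by (rule sum.cong[OF refl])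
  also have "\<dots> = (\<Sum>u\<in>W. \<Sum>a\<in>A. if u \<in> Q a then g u else 0)"
    by (rule sum.swap)
  also have "\<dots> = (\<Sum>u\<in>W. real (card {a\<in>A. u \<in> Q a}) * g u)"
    by (intro sum.cong refl) (simp add: sum.inter_filter[OF assms(1), symmetric])
  finally show ?thesis .
qed

context rtree
begin

text \<open>Contracting a set \<open>K\<close> of edges (edges are named by their lower end) shortens root paths
  to \<open>contracted_path K\<close>; the depth of \<open>v\<close> in the contracted tree is \<open>card (contracted_path K v)\<close>.\<close>

definition contracted_path :: "'v set \<Rightarrow> 'v \<Rightarrow> 'v set" where
  "contracted_path K v = path_edges rt par v - K"

lemma finite_contracted_path: "finite (contracted_path K v)"
  unfolding contracted_path_def using finite_path_edges by simp

lemma contracted_path_subset: "v \<in> V \<Longrightarrow> contracted_path K v \<subseteq> V - {rt} - K"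
  unfolding contracted_path_def using path_edges_subset by blast

lemma contracted_path_trans:
  "v \<in> V \<Longrightarrow> u \<in> contracted_path K v \<Longrightarrow> contracted_path K u \<subseteq> contracted_path K v"
  unfolding contracted_path_def using path_edges_trans by blast

lemma self_in_contracted_path: "v \<in> V \<Longrightarrow> u \<in> contracted_path K v \<Longrightarrow> u \<in> contracted_path K u"
  using contracted_path_subset self_in_path_edges unfolding contracted_path_def by blast

lemma contracted_path_psubset:
  assumes "v \<in> V" "u \<in> contracted_path K v" "u' \<in> contracted_path K v"
    and "tdist rt par u \<le> tdist rt par u'" "u \<noteq> u'"
  shows "contracted_path K u \<subset> contracted_path K u'"
proof -
  have "u \<in> V" "u' \<in> V"
    using contracted_path_subset[OF assms(1)] assms(2,3) by blast+
  have "u \<in> path_edges rt par u'"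
    using path_edges_linear[OF assms(1) _ _ assms(4)] assms(2,3,5) unfolding contracted_path_def by blast
  then have "u \<in> contracted_path K u'"
    using assms(2) unfolding contracted_path_def by blast
  then have "contracted_path K u \<subseteq> contracted_path K u'"
    using contracted_path_trans[OF \<open>u' \<in> V\<close>] by blast
  moreover have "u' \<notin> contracted_path K u"
    using tdist_less_path_edges[OF \<open>u' \<in> V\<close> \<open>u \<in> path_edges rt par u'\<close>]
      tdist_less_path_edges[OF \<open>u \<in> V\<close>] assms(5) unfolding contracted_path_def by fastforce
  ultimately show ?thesis
    using self_in_contracted_path[OF assms(1,3)] by blast
qed

lemma contracted_path_subset_of_deepest:
  assumes "v \<in> V" "w \<in> contracted_path K v"
    and "\<forall>u\<in>contracted_path K v. tdist rt par u \<le> tdist rt par w"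
    and "x \<in> V" "w \<in> path_edges rt par x"
  shows "contracted_path K v \<subseteq> path_edges rt par x"
proof
  fix u assume "u \<in> contracted_path K v"
  then have "u = w \<or> u \<in> path_edges rt par w"
    using path_edges_linear[OF assms(1)] assms(2,3) unfolding contracted_path_def by blast
  then show "u \<in> path_edges rt par x"
    using path_edges_trans[OF assms(4,5)] assms(5) by blast
qed

lemma contracted_depths_on_path:
  assumes "v \<in> V"
  shows "inj_on (\<lambda>u. card (contracted_path K u)) (contracted_path K v)"
    and "(\<lambda>u. card (contracted_path K u)) ` contracted_path K v = {1..card (contracted_path K v)}"
proof -
  let ?d = "\<lambda>u. card (contracted_path K u)"
  have less: "?d u < ?d u'"
    if "u \<in> contracted_path K v" "u' \<in> contracted_path K v" "tdist rt par u \<le> tdist rt par u'" "u \<noteq> u'"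
    for u u'
    using contracted_path_psubset[OF assms that] finite_contracted_path by (rule psubset_card_mono[rotated])
  show inj: "inj_on ?d (contracted_path K v)"
  proof (rule inj_onI, rule ccontr)
    fix u u' assume "u \<in> contracted_path K v" "u' \<in> contracted_path K v" "?d u = ?d u'" "u \<noteq> u'"
    then show False
      using less[of u u'] less[of u' u] by (cases "tdist rt par u \<le> tdist rt par u'") auto
  qed
  have "?d ` contracted_path K v \<subseteq> {1..?d v}"
  proof
    fix j assume "j \<in> ?d ` contracted_path K v"
    then obtain u where u: "u \<in> contracted_path K v" "j = ?d u"
      by blast
    have "1 \<le> ?d u"
      using self_in_contracted_path[OF assms u(1)] finite_contracted_path
      by (metis One_nat_def Suc_leI card_gt_0_iff empty_iff)
    moreover have "?d u \<le> ?d v"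
      using contracted_path_trans[OF assms u(1)] finite_contracted_path by (simp add: card_mono)
    ultimately show "j \<in> {1..?d v}"
      using u by simp
  qed
  moreover have "card (?d ` contracted_path K v) = card {1..?d v}"
    using card_image[OF inj] by simp
  ultimately show "?d ` contracted_path K v = {1..?d v}"
    by (intro card_subset_eq) auto
qed

lemma sum_contracted_path:
  assumes "v \<in> V"
  shows "(\<Sum>u\<in>contracted_path K v. (1/2::real) ^ card (contracted_path K u))
           = 1 - (1/2) ^ card (contracted_path K v)"
proof -
  have geometric: "(\<Sum>j\<in>{1..m}. (1/2::real) ^ j) = 1 - (1/2) ^ m" for m
    by (induction m) (auto simp: atLeastAtMostSuc_conv)
  have "(\<Sum>u\<in>contracted_path K v. (1/2::real) ^ card (contracted_path K u))
          = (\<Sum>j\<in>{1..card (contracted_path K v)}. (1/2) ^ j)"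
    using sum.reindex[OF contracted_depths_on_path(1)[OF assms], of "\<lambda>j. (1/2::real) ^ j"]
      contracted_depths_on_path(2)[OF assms] by simp
  also have "\<dots> = 1 - (1/2) ^ card (contracted_path K v)"
    using geometric by blast
  finally show ?thesis .
qed

text \<open>By \<open>sum_contracted_path\<close>, the weight \<open>2 ^ - depth\<close> of a vertex is
  \<open>1\<close> minus the total weight of its contracted root path; summing this over the elements of \<open>C\<close>
  and over the edges \<open>W\<close>, and comparing the two double counts via the last hypothesis, bounds the
  total weight of the elements by \<open>card C - card W = 1\<close>.\<close>

lemma kraft_sum_le_one:
  fixes g :: "'c \<Rightarrow> 'v" and K :: "'v set"
  defines "W \<equiv> V - {rt} - K"
  assumes "finite C" "g ` C \<subseteq> V" "card C = card W + 1"
    and "\<And>u. u \<in> W \<Longrightarrow> card {y\<in>W. u \<in> contracted_path K y} < card {x\<in>C. u \<in> contracted_path K (g x)}"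
  shows "(\<Sum>x\<in>C. (1/2::real) ^ card (contracted_path K (g x))) \<le> 1"
proof -
  let ?w = "\<lambda>u. (1/2::real) ^ card (contracted_path K u)"
  have finW: "finite W"
    unfolding W_def using finite_vertices by simp
  have path_W: "contracted_path K v \<subseteq> W" if "v \<in> V" for v
    unfolding W_def using contracted_path_subset[OF that] .
  have path_g_W: "contracted_path K (g x) \<subseteq> W" if "x \<in> C" for x
    using path_W assms(3) that by blast
  have "real (card W) = (\<Sum>y\<in>W. 1 - ?w y) + (\<Sum>u\<in>W. ?w u)"
    by (simp add: sum.distrib[symmetric])
  also have "(\<Sum>y\<in>W. 1 - ?w y) = (\<Sum>y\<in>W. \<Sum>u\<in>contracted_path K y. ?w u)"
    using sum_contracted_path unfolding W_def by simp
  also have "(\<Sum>y\<in>W. \<Sum>u\<in>contracted_path K y. ?w u)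
               = (\<Sum>u\<in>W. real (card {y\<in>W. u \<in> contracted_path K y}) * ?w u)"
    using sum_sum_eq_sum_card[OF finW finW] path_W W_def by blast
  also have "\<dots> + (\<Sum>u\<in>W. ?w u) = (\<Sum>u\<in>W. real (card {y\<in>W. u \<in> contracted_path K y} + 1) * ?w u)"
    by (simp add: distrib_right sum.distrib)
  also have "\<dots> \<le> (\<Sum>u\<in>W. real (card {x\<in>C. u \<in> contracted_path K (g x)}) * ?w u)"
    using assms(5) by (intro sum_mono mult_right_mono) (auto simp flip: of_nat_Suc intro: Suc_leI)
  also have "\<dots> = (\<Sum>x\<in>C. \<Sum>u\<in>contracted_path K (g x). ?w u)"
    using sum_sum_eq_sum_card[OF assms(2) finW path_g_W] by simp
  finally have "real (card W) \<le> (\<Sum>x\<in>C. \<Sum>u\<in>contracted_path K (g x). ?w u)" .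
  moreover have "(\<Sum>x\<in>C. ?w (g x)) = real (card C) - (\<Sum>x\<in>C. \<Sum>u\<in>contracted_path K (g x). ?w u)"
    using sum_contracted_path assms(3) by (simp add: sum_subtractf subset_iff)
  ultimately show ?thesis
    using assms(4) by simp
qed

lemma card_le_two_power_tdepth:
  fixes g :: "'c \<Rightarrow> 'v" and K :: "'v set"
  defines "W \<equiv> V - {rt} - K"
  assumes "finite C" "g ` C \<subseteq> V" "card C = card W + 1"
    and "\<And>u. u \<in> W \<Longrightarrow> card {y\<in>W. u \<in> contracted_path K y} < card {x\<in>C. u \<in> contracted_path K (g x)}"
  shows "card C \<le> 2 ^ tdepth V rt par"
proof -
  let ?k = "tdepth V rt par"
  have "(\<Sum>x\<in>C. (1/2::real) ^ ?k) \<le> (\<Sum>x\<in>C. (1/2) ^ card (contracted_path K (g x)))"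
  proof (rule sum_mono)
    fix x assume "x \<in> C"
    then have "g x \<in> V"
      using assms(3) by blast
    have "card (contracted_path K (g x)) \<le> card (path_edges rt par (g x))"
      unfolding contracted_path_def by (rule card_mono[OF finite_path_edges]) blast
    also have "\<dots> \<le> ?k"
      using card_path_edges_le tdist_le_tdepth[OF \<open>g x \<in> V\<close>] by (rule le_trans)
    finally show "(1/2::real) ^ ?k \<le> (1/2) ^ card (contracted_path K (g x))"
      by (rule power_decreasing) auto
  qed
  also have "\<dots> \<le> 1"
    using kraft_sum_le_one[OF assms(2-5)[unfolded W_def]] .
  finally have "real (card C) \<le> 2 ^ ?k"
    by (simp add: power_one_over field_simps)
  then show ?thesis
    by (metis of_nat_le_iff of_nat_numeral of_nat_power)
qed

end

locale decomposition = indep_matroid E indep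
  for E :: "'a set" and indep :: "'a set \<Rightarrow> bool" +
  fixes V :: "'v set" and rt :: 'v and par :: "'v \<Rightarrow> 'v" and f :: "'a \<Rightarrow> 'v"
  assumes decomposition: "depth_decomposition E indep V rt par f"
begin

sublocale rtree V rt par
  using decomposition unfolding depth_decomposition_def by unfold_locales blast

lemma image_in_vertices: "x \<in> E \<Longrightarrow> f x \<in> V"
  using decomposition unfolding depth_decomposition_def by blast

definition contracted_star :: "'v set \<Rightarrow> 'a set \<Rightarrow> 'v set" where
  "contracted_star K X = (\<Union>x\<in>X. contracted_path K (f x))"

text \<open>Contracting the edges \<open>K\<close> of the tree turns \<open>(V, rt, par, f)\<close> into a depth-decomposition
  of the restriction of the matroid to \<open>F\<close>.\<close>

definition restricts_to :: "'a set \<Rightarrow> 'v set \<Rightarrow> bool" where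
  "restricts_to F K \<longleftrightarrow> K \<subseteq> V - {rt} \<and> card (V - {rt} - K) = mrank indep F \<and>
     (\<forall>X\<subseteq>F. mrank indep X \<le> card (contracted_star K X))"

lemma contracted_star_subset: "X \<subseteq> E \<Longrightarrow> contracted_star K X \<subseteq> V - {rt} - K"
  unfolding contracted_star_def using contracted_path_subset image_in_vertices by blast

lemma finite_contracted_star: "X \<subseteq> E \<Longrightarrow> finite (contracted_star K X)"
  using contracted_star_subset finite_vertices finite_subset by (metis finite_Diff)

lemma restricts_to_carrier: "restricts_to E {}"
proof -
  have "card (V - {rt}) = mrank indep E"
    using decomposition root_in_vertices finite_vertices
    unfolding depth_decomposition_def tedges_def by simp
  moreover have "contracted_star {} X = (\<Union>x\<in>X. path_edges rt par (f x))" for X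
    unfolding contracted_star_def contracted_path_def by simp
  ultimately show ?thesis
    using decomposition unfolding restricts_to_def depth_decomposition_def tstar_edges_def by auto
qed

text \<open>Deleting a coloop \<open>e\<close>: contract the deepest remaining edge \<open>w\<close> on the root path of \<open>f e\<close>.
  Every element whose root path meets \<open>w\<close> already covers the whole contracted path of \<open>f e\<close>,
  so adding \<open>e\<close> to such a set raises its rank but not its star.\<close>

lemma restricts_to_delete_coloop:
  assumes K: "restricts_to (insert e F) K" and "insert e F \<subseteq> E"
    and coloop: "mrank indep (insert e F) = mrank indep F + 1"
  shows "\<exists>K'. restricts_to F K'"
proof -
  let ?S = "contracted_path K (f e)"
  have "f e \<in> V"
    using assms(2) image_in_vertices by blast
  have "mrank indep {e} = 1"
    using rank_insert_Suc_subset[OF _ coloop, of "{}"] rank_empty by simp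
  moreover have "mrank indep {e} \<le> card (contracted_star K {e})"
    using K unfolding restricts_to_def by blast
  ultimately have "?S \<noteq> {}"
    unfolding contracted_star_def by auto
  then have "Max (tdist rt par ` ?S) \<in> tdist rt par ` ?S"
    using finite_contracted_path by simp
  then obtain w where w: "w \<in> ?S" and "tdist rt par w = Max (tdist rt par ` ?S)"
    by (metis imageE)
  then have deepest: "\<forall>v\<in>?S. tdist rt par v \<le> tdist rt par w"
    using finite_contracted_path by simp
  have w_in: "w \<in> V - {rt} - K"
    using w contracted_path_subset[OF \<open>f e \<in> V\<close>] by blast
  have "restricts_to F (insert w K)"
    unfolding restricts_to_def
  proof (intro conjI allI impI)
    show "insert w K \<subseteq> V - {rt}"
      using K w_in unfolding restricts_to_def by blast
    show "card (V - {rt} - insert w K) = mrank indep F"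
    proof -
      have "V - {rt} - insert w K = (V - {rt} - K) - {w}"
        by blast
      then show ?thesis
        using K w_in coloop finite_vertices unfolding restricts_to_def by simp
    qed
    fix X assume "X \<subseteq> F"
    show "mrank indep X \<le> card (contracted_star (insert w K) X)"
    proof (cases "w \<in> contracted_star K X")
      case False
      then have "contracted_star (insert w K) X = contracted_star K X"
        unfolding contracted_star_def contracted_path_def by blast
      then show ?thesis
        using K \<open>X \<subseteq> F\<close> unfolding restricts_to_def by auto
    next
      case True
      then have "contracted_star K (insert e X) = contracted_star K X"
        using contracted_path_subset_of_deepest[OF \<open>f e \<in> V\<close> w deepest image_in_vertices]
          \<open>X \<subseteq> F\<close> assms(2) unfolding contracted_star_def contracted_path_def by blast
      then have "mrank indep X + 1 \<le> card (contracted_star K X)"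
        using K \<open>X \<subseteq> F\<close> rank_insert_Suc_subset[OF \<open>X \<subseteq> F\<close> coloop]
        unfolding restricts_to_def by (metis insert_mono)
      moreover have "contracted_star (insert w K) X = contracted_star K X - {w}"
        unfolding contracted_star_def contracted_path_def by blast
      ultimately show ?thesis
        using True finite_contracted_star \<open>X \<subseteq> F\<close> assms(2) by simp
    qed
  qed
  then show ?thesis ..
qed

lemma restricts_to_delete:
  assumes "restricts_to (insert e F) K" "insert e F \<subseteq> E"
  shows "\<exists>K'. restricts_to F K'"
proof (cases "mrank indep (insert e F) = mrank indep F")
  case True
  then show ?thesis
    using assms(1) unfolding restricts_to_def by (metis subset_insertI2)
next
  case False
  then have "mrank indep (insert e F) = mrank indep F + 1"
    using rank_mono[of F "insert e F"] rank_insert_le[of e F] by (simp add: subset_insertI)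
  then show ?thesis
    using restricts_to_delete_coloop assms by blast
qed

lemma restricts_to_exists:
  assumes "F \<subseteq> E"
  shows "\<exists>K. restricts_to F K"
proof -
  have "\<exists>K. restricts_to (E - D) K" if "D \<subseteq> E" for D
    using finite_subset[OF that finite_carrier] that
  proof (induction D rule: finite_subset_induct')
    case empty
    then show ?case
      using restricts_to_carrier by auto
  next
    case (insert a D)
    then have "insert a (E - insert a D) = E - D"
      by blast
    then show ?case
      using insert.IH restricts_to_delete[of a "E - insert a D"] by auto
  qed
  from this[of "E - F"] show ?thesis
    using assms by (simp add: double_diff)
qed

end

context decomposition
begin

lemma circuit_contracted_star:
  assumes C: "circuit E indep C" and K: "restricts_to C K"
  shows "contracted_star K C = V - {rt} - K"
proof (rule card_subset_eq)
  have "C \<subseteq> E"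
    using C unfolding circuit_def by blast
  then show star_sub: "contracted_star K C \<subseteq> V - {rt} - K"
    by (rule contracted_star_subset)
  show fin: "finite (V - {rt} - K)"
    using finite_vertices by simp
  have "card (V - {rt} - K) \<le> card (contracted_star K C)"
    using K unfolding restricts_to_def by auto
  then show "card (contracted_star K C) = card (V - {rt} - K)"
    using card_mono[OF fin star_sub] by simp
qed

text \<open>The elements of \<open>C\<close> whose contracted root paths avoid the edge \<open>u\<close> form a proper, hence
  independent, subset of the circuit; its star misses \<open>u\<close> and every edge below \<open>u\<close>.\<close>

lemma circuit_count_below_edge:
  assumes C: "circuit E indep C" and K: "restricts_to C K" and u: "u \<in> V - {rt} - K"
  shows "card {y \<in> V - {rt} - K. u \<in> contracted_path K y} < card {x\<in>C. u \<in> contracted_path K (f x)}"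
proof -
  define W where "W = V - {rt} - K"
  define A where "A = {x\<in>C. u \<in> contracted_path K (f x)}"
  define B where "B = {y\<in>W. u \<in> contracted_path K y}"
  have CE: "C \<subseteq> E" and finC: "finite C"
    using C circuit_finite unfolding circuit_def by auto
  have finW: "finite W"
    unfolding W_def using finite_vertices by simp
  have "A \<noteq> {}"
    using circuit_contracted_star[OF C K] u unfolding contracted_star_def A_def by auto
  then have "C - A \<subset> C"
    unfolding A_def by blast
  then have "indep (C - A)"
    using C unfolding circuit_def by blast
  moreover have "mrank indep (C - A) \<le> card (contracted_star K (C - A))"
    using K unfolding restricts_to_def by blast
  ultimately have "card (C - A) \<le> card (contracted_star K (C - A))"
    using rank_indep by simp
  also have "\<dots> \<le> card (W - B)"
  proof (rule card_mono)
    show "finite (W - B)"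
      using finW by simp
    show "contracted_star K (C - A) \<subseteq> W - B"
    proof
      fix y assume "y \<in> contracted_star K (C - A)"
      then obtain x where x: "x \<in> C - A" "y \<in> contracted_path K (f x)"
        unfolding contracted_star_def by blast
      then have "u \<notin> contracted_path K y"
        using contracted_path_trans[OF image_in_vertices] CE unfolding A_def by blast
      moreover have "y \<in> W"
        using contracted_path_subset[OF image_in_vertices] x CE unfolding W_def by blast
      ultimately show "y \<in> W - B"
        unfolding B_def by blast
    qed
  qed
  also have "\<dots> = card W - card B"
    using finW unfolding B_def by (simp add: card_Diff_subset)
  finally have "card C - card A \<le> card W - card B"
    using finC card_Diff_subset[of A C] unfolding A_def by (simp add: finite_subset)
  moreover have "card W = card C - 1"
    using K circuit_rank[OF C] unfolding restricts_to_def W_def by simp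
  moreover have "card A \<le> card C" "card B \<le> card W"
    using finC finW unfolding A_def B_def by (auto intro: card_mono)
  moreover have "card C \<ge> 1"
    using circuit_nonempty[OF C] finC by (simp add: Suc_le_eq card_gt_0_iff)
  ultimately show ?thesis
    unfolding A_def B_def W_def by linarith
qed

lemma circuit_card_le_two_power_tdepth:
  assumes C: "circuit E indep C"
  shows "card C \<le> 2 ^ tdepth V rt par"
proof -
  have CE: "C \<subseteq> E"
    using C unfolding circuit_def by blast
  obtain K where K: "restricts_to C K"
    using restricts_to_exists[OF CE] by blast
  have "card C \<noteq> 0"
    using circuit_finite[OF C] circuit_nonempty[OF C] by simp
  then have "card C = card (V - {rt} - K) + 1"
    using K circuit_rank[OF C] unfolding restricts_to_def by simp
  then show ?thesis
    using circuit_finite[OF C] image_in_vertices CE circuit_count_below_edge[OF C K]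
    by (intro card_le_two_power_tdepth[where g = f and K = K]) auto
qed

end

lemma funpow_minus_one: "((\<lambda>v::nat. v - 1) ^^ n) v = v - n"
  by (induction n) auto

lemma tdist_minus_one: "tdist 0 (\<lambda>v::nat. v - 1) v = v"
  unfolding tdist_def by (rule Least_equality) (auto simp: funpow_minus_one[simplified])

text \<open>A path of length \<open>r(M)\<close> with every element at its far end is always a depth-decomposition,
  so the \<open>LEAST\<close> in \<open>branch_depth\<close> is attained.\<close>

lemma (in indep_matroid) exists_depth_decomposition:
  "\<exists>(V :: nat set) rt par f. depth_decomposition E indep V rt par f"
proof -
  define r where "r = mrank indep E"
  have path: "path_edges 0 (\<lambda>v. v - 1) r = {1..r}"
  proof -
    have "path_edges 0 (\<lambda>v. v - 1) r = (\<lambda>i. r - i) ` {..<r}"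
      unfolding path_edges_def tdist_minus_one funpow_minus_one by auto
    also have "\<dots> = {1..r}"
    proof (intro equalityI subsetI)
      fix x assume "x \<in> {1..r}"
      then have "x = r - (r - x)" "r - x < r"
        by auto
      then show "x \<in> (\<lambda>i. r - i) ` {..<r}"
        by blast
    qed auto
    finally show ?thesis .
  qed
  have "mrank indep X \<le> tstar_edges 0 (\<lambda>v. v - 1) ((\<lambda>x. r) ` X)" if "X \<subseteq> E" for X
  proof (cases "X = {}")
    case True
    then show ?thesis
      using rank_empty by simp
  next
    case False
    then show ?thesis
      using rank_mono[OF that] path unfolding tstar_edges_def r_def by simp
  qed
  moreover have "rooted_tree {0..r} 0 (\<lambda>v. v - 1)"
    unfolding rooted_tree_def using funpow_minus_one by auto
  ultimately have "depth_decomposition E indep {0..r} 0 (\<lambda>v. v - 1) (\<lambda>x. r)"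
    unfolding depth_decomposition_def tedges_def r_def by auto
  then show ?thesis
    by blast
qed

theorem proposition3p4:
  fixes E :: "'a set" and indep :: "'a set \<Rightarrow> bool"
  assumes "matroid E indep"
    and "\<exists>C. circuit E indep C"
  shows "real (branch_depth E indep) \<ge> log 2 (Max (card ` {C. circuit E indep C}))"
proof -
  interpret indep_matroid E indep
    using assms(1) by unfold_locales
  obtain V :: "nat set" and rt par f where D: "depth_decomposition E indep V rt par f"
    and depth: "tdepth V rt par = branch_depth E indep"
    using LeastI_ex[of "\<lambda>k. \<exists>(V :: nat set) rt par f. depth_decomposition E indep V rt par f \<and>
      tdepth V rt par = k"] exists_depth_decomposition unfolding branch_depth_def by blast
  interpret decomposition E indep V rt par f
    using D by unfold_locales
  have "Max (card ` {C. circuit E indep C}) \<in> card ` {C. circuit E indep C}"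
    using finite_circuits assms(2) by (intro Max_in) auto
  then obtain C where C: "circuit E indep C" and max: "Max (card ` {C. circuit E indep C}) = card C"
    by auto
  have "0 < card C"
    using circuit_finite[OF C] circuit_nonempty[OF C] by (simp add: card_gt_0_iff)
  moreover have "real (card C) \<le> 2 ^ branch_depth E indep"
    using circuit_card_le_two_power_tdepth[OF C] depth by (metis of_nat_le_iff of_nat_numeral of_nat_power)
  ultimately have "log 2 (card C) \<le> log 2 (2 ^ branch_depth E indep)"
    by (subst log_le_cancel_iff) auto
  then show ?thesis
    using max by (simp add: log_nat_power)
qed

end
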